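(* Let $q\ge2$ be an integer and $d$ an even positive integer. Then the network $\mathcal{N}_1$ (with parameter $q$) has a $d$-dimensional VLNC solution over every finite field.
   Context: Vector linear network coding: each source $v$ generates $x_v\in F^d$; an edge out of a source $v$ carries $Ax_v$ for a $d\times d$ matrix $A$ over $F$; an edge out of an intermediate node carries $\sum A_{e',e}y_{e'}$ over the edges $e'$ entering that node; a terminal computes vectors $\sum B_ey_e$ over its incoming edges; a $d$-dimensional VLNC solution over $F$ is such a code with which every terminal computes each demanded message for all message choices. The Char-$q$-$s$ network (integer $q\ge2$): sources $s,x_1,\dots,x_{q+2}$; intermediate nodes $m_1,\dots,m_{q+3},n_1,\dots,n_{q+3}$; terminals $r_1,\dots,r_{q+3}$; edges: $(x_1,m_i)$ for $1\le i\le q+1$; $(s,m_1)$ and $(s,m_i)$ for $4\le i\le q+3$; $(x_i,m_j)$ for $2\le i,j\le q+2$, $i\ne j$; $(x_i,m_{q+3})$ for $1\le i\le q+2$; $e_i=(m_i,n_i)$ for $1\le i\le q+3$; $(n_i,r_i)$ for $1\le i\le q+2$; $(n_{q+3},r_i)$ and $(n_i,r_{q+3})$ for $1\le i\le q+2$; $(x_i,r_1)$ for $2\le i\le q+1$; $(x_1,r_{q+2})$; $(s,r_2)$; $(s,r_3)$. Demands: $r_1$ demands $x_{q+2}$; $r_i$ demands $x_i$ for $2\le i\le q+2$; $r_{q+3}$ demands $x_1$; no terminal demands $s$. The M-network: sources $a,b,x,y$; intermediate nodes $u_1,u_2,v_1,v_2,v_3$; terminals $t_1,\dots,t_4$; edges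 $(a,u_1),(b,u_1),(x,u_2),(y,u_2),(u_1,v_1),(u_1,v_3),(u_2,v_2),(u_2,v_3)$ and $(v_i,t_j)$ for $i=1,2,3$, $j=1,\dots,4$; demands: $t_1$ demands $a,x$; $t_2$ demands $a,y$; $t_3$ demands $b,x$; $t_4$ demands $b,y$. The network $\mathcal{N}_1$ is obtained from the disjoint union of the M-network and the Char-$q$-$s$ network by identifying source $x_1$ with $a$ and source $s$ with $y$ (so $a$ gets all edges out of $x_1$ and $y$ gets all edges out of $s$; terminal $r_{q+3}$ now demands $a$), and adding one new edge $(n_1,t_4)$. All other demands are unchanged. *)

theory Defs
  imports Main
begin

text \<open>Vectors in F^d are represented as functions nat => F (only indices < d matter),
  d x d matrices as functions nat => nat => F (only indices < d matter).\<close>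

definition mv :: "nat \<Rightarrow> (nat \<Rightarrow> nat \<Rightarrow> 'a::comm_ring_1) \<Rightarrow> (nat \<Rightarrow> 'a) \<Rightarrow> (nat \<Rightarrow> 'a)" where
  "mv d M v = (\<lambda>i. \<Sum>j<d. M i j * v j)"

record 'n network =
  srcs :: "'n set"
  edges :: "('n \<times> 'n) set"
  dem :: "'n \<Rightarrow> 'n set"

definition in_edges :: "'n network \<Rightarrow> 'n \<Rightarrow> ('n \<times> 'n) set" where
  "in_edges N u = {e \<in> edges N. snd e = u}"

definition edge_eqs ::
  "'n network \<Rightarrow> nat \<Rightarrow> ('n \<times> 'n \<Rightarrow> nat \<Rightarrow> nat \<Rightarrow> 'a::comm_ring_1)
   \<Rightarrow> ('n \<times> 'n \<Rightarrow> 'n \<times> 'n \<Rightarrow> nat \<Rightarrow> nat \<Rightarrow> 'a)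
   \<Rightarrow> ('n \<Rightarrow> nat \<Rightarrow> 'a) \<Rightarrow> ('n \<times> 'n \<Rightarrow> nat \<Rightarrow> 'a) \<Rightarrow> bool" where
  "edge_eqs N d A K x y \<longleftrightarrow>
     (\<forall>e\<in>edges N. y e =
        (if fst e \<in> srcs N then mv d (A e) (x (fst e))
         else (\<lambda>i. \<Sum>e'\<in>in_edges N (fst e). mv d (K e' e) (y e') i)))"

definition vlnc_solution ::
  "'n network \<Rightarrow> nat \<Rightarrow> ('n \<times> 'n \<Rightarrow> nat \<Rightarrow> nat \<Rightarrow> 'a::field)
   \<Rightarrow> ('n \<times> 'n \<Rightarrow> 'n \<times> 'n \<Rightarrow> nat \<Rightarrow> nat \<Rightarrow> 'a)
   \<Rightarrow> ('n \<Rightarrow> 'n \<Rightarrow> 'n \<times> 'n \<Rightarrow> nat \<Rightarrow> nat \<Rightarrow> 'a) \<Rightarrow> bool" where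
  "vlnc_solution N d A K B \<longleftrightarrow>
     (\<forall>x. (\<exists>y. edge_eqs N d A K x y) \<and>
          (\<forall>y. edge_eqs N d A K x y \<longrightarrow>
              (\<forall>t. \<forall>v\<in>dem N t. \<forall>i<d.
                 (\<Sum>e\<in>in_edges N t. mv d (B t v e) (y e) i) = x v i)))"

definition has_vlnc_solution :: "'n network \<Rightarrow> nat \<Rightarrow> 'a::field itself \<Rightarrow> bool" where
  "has_vlnc_solution N d (_::'a itself) \<longleftrightarrow>
     (\<exists>(A::'n \<times> 'n \<Rightarrow> nat \<Rightarrow> nat \<Rightarrow> 'a) K B. vlnc_solution N d A K B)"

text \<open>Nodes: Src_s, Xn i, Mn i, Nn i, Rn i belong to the Char-q-s network;
  Ma, Mb, Mx, My, Um i, Vn i, Tn j to the M-network.\<close>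
datatype node = Src_s | Xn nat | Mn nat | Nn nat | Rn nat
  | Ma | Mb | Mx | My | Um nat | Vn nat | Tn nat

definition char_srcs :: "nat \<Rightarrow> node set" where
  "char_srcs q = {Src_s} \<union> {Xn i | i. 1 \<le> i \<and> i \<le> q + 2}"

definition char_edges :: "nat \<Rightarrow> (node \<times> node) set" where
  "char_edges q =
     {(Xn 1, Mn i) | i. 1 \<le> i \<and> i \<le> q + 1}
   \<union> {(Src_s, Mn 1)}
   \<union> {(Src_s, Mn i) | i. 4 \<le> i \<and> i \<le> q + 3}
   \<union> {(Xn i, Mn j) | i j. 2 \<le> i \<and> i \<le> q + 2 \<and> 2 \<le> j \<and> j \<le> q + 2 \<and> i \<noteq> j}
   \<union> {(Xn i, Mn (q + 3)) | i. 1 \<le> i \<and> i \<le> q + 2}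
   \<union> {(Mn i, Nn i) | i. 1 \<le> i \<and> i \<le> q + 3}
   \<union> {(Nn i, Rn i) | i. 1 \<le> i \<and> i \<le> q + 2}
   \<union> {(Nn (q + 3), Rn i) | i. 1 \<le> i \<and> i \<le> q + 2}
   \<union> {(Nn i, Rn (q + 3)) | i. 1 \<le> i \<and> i \<le> q + 2}
   \<union> {(Xn i, Rn 1) | i. 2 \<le> i \<and> i \<le> q + 1}
   \<union> {(Xn 1, Rn (q + 2)), (Src_s, Rn 2), (Src_s, Rn 3)}"

definition char_dem :: "nat \<Rightarrow> node \<Rightarrow> node set" where
  "char_dem q t = (case t of
       Rn i \<Rightarrow> (if i = 1 then {Xn (q + 2)}
                else if 2 \<le> i \<and> i \<le> q + 2 then {Xn i}
                else if i = q + 3 then {Xn 1}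
                else {})
     | _ \<Rightarrow> {})"

definition m_srcs :: "node set" where
  "m_srcs = {Ma, Mb, Mx, My}"

definition m_edges :: "(node \<times> node) set" where
  "m_edges = {(Ma, Um 1), (Mb, Um 1), (Mx, Um 2), (My, Um 2),
              (Um 1, Vn 1), (Um 1, Vn 3), (Um 2, Vn 2), (Um 2, Vn 3)}
           \<union> {(Vn i, Tn j) | i j. 1 \<le> i \<and> i \<le> 3 \<and> 1 \<le> j \<and> j \<le> 4}"

definition m_dem :: "node \<Rightarrow> node set" where
  "m_dem t = (if t = Tn 1 then {Ma, Mx}
              else if t = Tn 2 then {Ma, My}
              else if t = Tn 3 then {Mb, Mx}
              else if t = Tn 4 then {Mb, My}
              else {})"

definition ident :: "node \<Rightarrow> node" where
  "ident v = (if v = Xn 1 then Ma else if v = Src_s then My else v)"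

definition N1 :: "nat \<Rightarrow> node network" where
  "N1 q = \<lparr> srcs = ident ` char_srcs q \<union> m_srcs,
            edges = map_prod ident ident ` char_edges q \<union> m_edges \<union> {(Nn 1, Tn 4)},
            dem = (\<lambda>t. ident ` char_dem q t \<union> m_dem t) \<rparr>"

end

theory Submission
  imports Defs
begin

text \<open>Split every message of dimension d = 2k into two halves. In the M-network, u_1 sends the
  lower halves of a and b to v_1 and their upper halves to v_3, u_2 does the same with x and y, and
  v_3 passes on to each t_j the upper halves of the two messages t_j demands; the lower halves
  arrive through v_1 and v_2. In the Char-q-s part every m-node forwards the sum of its inputs
  other than s, so n_{q+3} carries x_1 + ... + x_{q+2} and n_1 carries x_1, and each r_i recovers
  its demand by subtracting sums it knows. Only the coefficients 0, 1 and -1 occur, hence the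
  code works over every field, finite or not, and for d = 0 as well; the extra edge (n_1, t_4)
  is ignored.\<close>

abbreviation preds :: "'n network \<Rightarrow> 'n \<Rightarrow> 'n set" where
  "preds N w \<equiv> {u. (u, w) \<in> edges N}"

lemma sum_in_edges: "(\<Sum>e\<in>in_edges N w. g e) = (\<Sum>u\<in>preds N w. g (u, w))"
proof -
  have "in_edges N w = (\<lambda>u. (u, w)) ` preds N w"
    by (force simp: in_edges_def)
  moreover have "inj_on (\<lambda>u. (u, w)) (preds N w)"
    by (auto simp: inj_on_def)
  ultimately show ?thesis
    by (simp add: sum.reindex)
qed

lemma edge_eqs_source_edge:
  assumes "edge_eqs N d A K x y" and "(u, w) \<in> edges N" and "u \<in> srcs N"
  shows "y (u, w) = mv d (A (u, w)) (x u)"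
  using assms unfolding edge_eqs_def by fastforce

lemma edge_eqs_inner_edge:
  assumes "edge_eqs N d A K x y" and "(u, w) \<in> edges N" and "u \<notin> srcs N"
  shows "y (u, w) i = (\<Sum>u'\<in>preds N u. mv d (K (u', u) (u, w)) (y (u', u)) i)"
proof -
  have "y (u, w) = (\<lambda>i. \<Sum>e'\<in>in_edges N u. mv d (K e' (u, w)) (y e') i)"
    using assms unfolding edge_eqs_def by fastforce
  then show ?thesis
    by (simp add: sum_in_edges)
qed

lemma edge_eqs_solvable:
  fixes level :: "'n \<Rightarrow> nat"
  assumes level: "\<And>e. e \<in> edges N \<Longrightarrow> level (fst e) < level (snd e) \<and> level (snd e) \<le> L"
  shows "\<exists>y. edge_eqs N d A K x y"
proof -
  define F where "F y e = (if fst e \<in> srcs N then mv d (A e) (x (fst e))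
       else (\<lambda>i. \<Sum>e'\<in>in_edges N (fst e). mv d (K e' e) (y e') i))" for y e
  have F_local: "\<forall>e\<in>edges N. level (fst e) < Suc n \<longrightarrow> F y e = F y' e"
    if "\<forall>e\<in>edges N. level (fst e) < n \<longrightarrow> y e = y' e" for y y' n
  proof (intro ballI impI)
    fix e assume e: "e \<in> edges N" "level (fst e) < Suc n"
    have "y e' = y' e'" if "e' \<in> in_edges N (fst e)" for e'
      using that level[of e'] e \<open>\<forall>e\<in>edges N. _\<close> by (auto simp: in_edges_def)
    then show "F y e = F y' e"
      unfolding F_def by (auto intro!: sum.cong)
  qed
  have stable: "\<forall>e\<in>edges N. level (fst e) < n \<longrightarrow> (F ^^ n) (\<lambda>_ _. 0) e = (F ^^ Suc n) (\<lambda>_ _. 0) e"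
    for n
    by (induction n) (simp_all add: F_local)
  define y where "y = (F ^^ L) (\<lambda>_ _. 0)"
  have "y e = F y e" if "e \<in> edges N" for e
    using that level[OF that] stable[of L] unfolding y_def by auto
  then have "edge_eqs N d A K x y"
    unfolding edge_eqs_def F_def by blast
  then show ?thesis by blast
qed

definition sel_mat :: "'a::comm_ring_1 \<Rightarrow> (nat \<Rightarrow> nat) \<Rightarrow> (nat \<Rightarrow> bool) \<Rightarrow> nat \<Rightarrow> nat \<Rightarrow> 'a" where
  "sel_mat c f P i l = (if l = f i \<and> P i then c else 0)"

lemma mv_sel_mat: "mv d (sel_mat c f P) v i = (if P i \<and> f i < d then c * v (f i) else 0)"
proof (cases "P i")
  case True
  then have "mv d (sel_mat c f P) v i = (\<Sum>l<d. if l = f i then c * v l else 0)"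
    unfolding mv_def sel_mat_def by (intro sum.cong) auto
  with True show ?thesis
    by (simp add: sum.delta)
next
  case False
  then show ?thesis
    by (simp add: mv_def sel_mat_def)
qed

definition "id_mat = sel_mat 1 id (\<lambda>_. True)"
definition "neg_id_mat = sel_mat (-1) id (\<lambda>_. True)"
definition "zero_mat = sel_mat 0 id (\<lambda>_. True)"
definition "lower_part k = sel_mat 1 id (\<lambda>i. i < k)"
definition "upper_part k = sel_mat 1 id (\<lambda>i. k \<le> i)"
definition "upper_to_lower k = sel_mat 1 (\<lambda>i. i + k) (\<lambda>i. i < k)"
definition "lower_to_upper k = sel_mat 1 (\<lambda>i. i - k) (\<lambda>i. k \<le> i)"

lemma mv_block_mats:
  "mv d id_mat v j = (if j < d then v j else 0)"
  "mv d neg_id_mat v j = (if j < d then - v j else 0)"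
  "mv d zero_mat v j = 0"
  "mv d (lower_part k) v j = (if j < k \<and> j < d then v j else 0)"
  "mv d (upper_part k) v j = (if k \<le> j \<and> j < d then v j else 0)"
  "mv d (upper_to_lower k) v j = (if j < k \<and> j + k < d then v (j + k) else 0)"
  "mv d (lower_to_upper k) v j = (if k \<le> j \<and> j - k < d then v (j - k) else 0)"
  by (simp_all add: id_mat_def neg_id_mat_def zero_mat_def lower_part_def upper_part_def
      upper_to_lower_def lower_to_upper_def mv_sel_mat)

lemma ident_simps:
  "ident (Xn 1) = Ma" "i \<noteq> 1 \<Longrightarrow> ident (Xn i) = Xn i" "ident Src_s = My"
  "ident (Mn i) = Mn i" "ident (Nn i) = Nn i" "ident (Rn i) = Rn i"
  by (simp_all add: ident_def)

lemma image_setcompr: "h ` {F i | i. P i} = {h (F i) | i. P i}"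
  by blast

lemma ident_Xn_Mn_edges:
  "map_prod ident ident ` {(Xn i, Mn j) | i j. 2 \<le> i \<and> i \<le> q + 2 \<and> 2 \<le> j \<and> j \<le> q + 2 \<and> i \<noteq> j}
   = {(Xn i, Mn j) | i j. 2 \<le> i \<and> i \<le> q + 2 \<and> 2 \<le> j \<and> j \<le> q + 2 \<and> i \<noteq> j}"
  by (rule image_cong[THEN trans, OF refl _ image_ident]) (auto simp: ident_simps)

lemma ident_Xn_Rn1_edges:
  "{(ident (Xn i), Rn 1) | i. 2 \<le> i \<and> i \<le> q + 1} = {(Xn i, Rn 1) | i. 2 \<le> i \<and> i \<le> q + 1}"
  by (metis (no_types, lifting) ident_simps(2) numeral_le_one_iff semiring_norm(69))

lemma ident_Xn_Mn_last_edges: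
  "{(ident (Xn i), Mn (q + 3)) | i. 1 \<le> i \<and> i \<le> q + 2}
   = insert (Ma, Mn (q + 3)) {(Xn i, Mn (q + 3)) | i. 2 \<le> i \<and> i \<le> q + 2}"
proof -
  have "{i. 1 \<le> i \<and> i \<le> q + 2} = insert 1 {i. 2 \<le> i \<and> i \<le> q + 2}"
    by auto
  then have "{(ident (Xn i), Mn (q + 3)) | i. 1 \<le> i \<and> i \<le> q + 2}
      = (\<lambda>i. (ident (Xn i), Mn (q + 3))) ` insert 1 {i. 2 \<le> i \<and> i \<le> q + 2}"
    by blast
  also have "\<dots> = insert (Ma, Mn (q + 3)) {(Xn i, Mn (q + 3)) | i. 2 \<le> i \<and> i \<le> q + 2}"
    by (auto simp: ident_def)
  finally show ?thesis .
qed

definition char_edges_identified :: "nat \<Rightarrow> (node \<times> node) set" where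
  "char_edges_identified q =
     {(Ma, Mn i) | i. 1 \<le> i \<and> i \<le> q + 1}
   \<union> {(My, Mn 1)}
   \<union> {(My, Mn i) | i. 4 \<le> i \<and> i \<le> q + 3}
   \<union> {(Xn i, Mn j) | i j. 2 \<le> i \<and> i \<le> q + 2 \<and> 2 \<le> j \<and> j \<le> q + 2 \<and> i \<noteq> j}
   \<union> insert (Ma, Mn (q + 3)) {(Xn i, Mn (q + 3)) | i. 2 \<le> i \<and> i \<le> q + 2}
   \<union> {(Mn i, Nn i) | i. 1 \<le> i \<and> i \<le> q + 3}
   \<union> {(Nn i, Rn i) | i. 1 \<le> i \<and> i \<le> q + 2}
   \<union> {(Nn (q + 3), Rn i) | i. 1 \<le> i \<and> i \<le> q + 2}
   \<union> {(Nn i, Rn (q + 3)) | i. 1 \<le> i \<and> i \<le> q + 2}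
   \<union> {(Xn i, Rn 1) | i. 2 \<le> i \<and> i \<le> q + 1}
   \<union> {(Ma, Rn (q + 2)), (My, Rn 2), (My, Rn 3)}"

lemma map_prod_ident_char_edges: "map_prod ident ident ` char_edges q = char_edges_identified q"
  unfolding char_edges_identified_def char_edges_def image_Un ident_Xn_Mn_edges
  by (simp only: image_setcompr map_prod_simp image_insert image_empty ident_simps(1,3-6)
      ident_Xn_Mn_last_edges ident_Xn_Rn1_edges)

lemma edges_N1: "edges (N1 q) = char_edges_identified q \<union> m_edges \<union> {(Nn 1, Tn 4)}"
  by (simp add: N1_def map_prod_ident_char_edges)

lemma srcs_N1: "srcs (N1 q) = {Ma, Mb, Mx, My} \<union> Xn ` {2..q+2}"
proof -
  have "ident ` char_srcs q = {My, Ma} \<union> Xn ` {2..q+2}"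
  proof (rule set_eqI, rule iffI)
    fix z assume "z \<in> ident ` char_srcs q"
    then show "z \<in> {My, Ma} \<union> Xn ` {2..q+2}"
      by (auto simp: char_srcs_def ident_def)
  next
    fix z assume "z \<in> {My, Ma} \<union> Xn ` {2..q+2}"
    then consider "z = ident Src_s" | "z = ident (Xn 1)" | i where "z = ident (Xn i)" "2 \<le> i" "i \<le> q + 2"
      by (auto simp: ident_def)
    then show "z \<in> ident ` char_srcs q"
      by cases (rule image_eqI, assumption, force simp: char_srcs_def)+
  qed
  then show ?thesis
    by (auto simp: N1_def m_srcs_def)
qed

lemma finite_edges_N1: "finite (edges (N1 q))"
proof -
  have "finite {(Xn i, Mn j) | i j. 2 \<le> i \<and> i \<le> q + 2 \<and> 2 \<le> j \<and> j \<le> q + 2 \<and> i \<noteq> j}"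
    by (rule finite_subset[of _ "(\<lambda>(i, j). (Xn i, Mn j)) ` ({..q+2} \<times> {..q+2})"]) auto
  moreover have "finite {(Vn i, Tn j) | i j. 1 \<le> i \<and> i \<le> 3 \<and> 1 \<le> j \<and> j \<le> 4}"
    by (rule finite_subset[of _ "(\<lambda>(i, j). (Vn i, Tn j)) ` ({..3} \<times> {..4})"]) auto
  ultimately show ?thesis
    unfolding edges_N1 char_edges_identified_def m_edges_def
    by (simp only: finite_Un finite_insert finite.emptyI simp_thms) (intro conjI finite_image_set; simp)
qed

lemma finite_preds_N1: "finite (preds (N1 q) w)"
  by (rule finite_subset[of _ "fst ` edges (N1 q)"]) (force simp: finite_edges_N1)+

fun N1_level :: "node \<Rightarrow> nat" where
  "N1_level (Mn _) = 1" | "N1_level (Um _) = 1"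
| "N1_level (Nn _) = 2" | "N1_level (Vn _) = 2"
| "N1_level (Rn _) = 3" | "N1_level (Tn _) = 3"
| "N1_level _ = 0"

lemma level_edges_N1: "e \<in> edges (N1 q) \<Longrightarrow> N1_level (fst e) < N1_level (snd e) \<and> N1_level (snd e) \<le> 3"
  unfolding edges_N1 char_edges_identified_def m_edges_def by auto

lemma srcs_N1_if_edge_into_Mn: "(u, Mn i) \<in> edges (N1 q) \<Longrightarrow> u \<in> srcs (N1 q)"
  unfolding edges_N1 char_edges_identified_def m_edges_def srcs_N1 by auto

lemma srcs_N1_simps:
  "Mn i \<notin> srcs (N1 q)" "Nn i \<notin> srcs (N1 q)" "Um i \<notin> srcs (N1 q)" "Vn i \<notin> srcs (N1 q)"
  "Ma \<in> srcs (N1 q)" "Mb \<in> srcs (N1 q)" "Mx \<in> srcs (N1 q)" "My \<in> srcs (N1 q)"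
  "2 \<le> i \<Longrightarrow> i \<le> q + 2 \<Longrightarrow> Xn i \<in> srcs (N1 q)"
  unfolding srcs_N1 by auto

lemma edges_N1_simps:
  "(Ma, Um 1) \<in> edges (N1 q)" "(Mb, Um 1) \<in> edges (N1 q)"
  "(Mx, Um 2) \<in> edges (N1 q)" "(My, Um 2) \<in> edges (N1 q)"
  "(Um 1, Vn 1) \<in> edges (N1 q)" "(Um 1, Vn 3) \<in> edges (N1 q)"
  "(Um 2, Vn 2) \<in> edges (N1 q)" "(Um 2, Vn 3) \<in> edges (N1 q)"
  "1 \<le> i \<Longrightarrow> i \<le> 3 \<Longrightarrow> 1 \<le> t \<Longrightarrow> t \<le> 4 \<Longrightarrow> (Vn i, Tn t) \<in> edges (N1 q)"
  "1 \<le> i \<Longrightarrow> i \<le> q + 3 \<Longrightarrow> (Mn i, Nn i) \<in> edges (N1 q)"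
  unfolding edges_N1 char_edges_identified_def m_edges_def by auto

lemma preds_N1_M_network:
  "preds (N1 q) (Um 1) = {Ma, Mb}" "preds (N1 q) (Um 2) = {Mx, My}"
  "preds (N1 q) (Vn 1) = {Um 1}" "preds (N1 q) (Vn 2) = {Um 2}" "preds (N1 q) (Vn 3) = {Um 1, Um 2}"
  "1 \<le> t \<Longrightarrow> t \<le> 4 \<Longrightarrow> {Vn 1, Vn 2, Vn 3} \<subseteq> preds (N1 q) (Tn t)"
  "preds (N1 q) (Tn t) \<subseteq> {Vn 1, Vn 2, Vn 3, Nn 1}"
  unfolding edges_N1 char_edges_identified_def m_edges_def by auto

lemma preds_N1_Nn: "(Nn i, w) \<in> edges (N1 q) \<Longrightarrow> preds (N1 q) (Nn i) = {Mn i}"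
  unfolding edges_N1 char_edges_identified_def m_edges_def by auto

lemma preds_N1_Rn:
  assumes "q \<ge> 2"
  shows "preds (N1 q) (Rn 1) = insert (Nn 1) (insert (Nn (q+3)) (Xn ` {2..q+1}))"
    and "2 \<le> i \<Longrightarrow> i \<le> q + 1 \<Longrightarrow> {Nn i, Nn (q+3)} \<subseteq> preds (N1 q) (Rn i)"
    and "2 \<le> i \<Longrightarrow> i \<le> q + 1 \<Longrightarrow> preds (N1 q) (Rn i) \<subseteq> {Nn i, Nn (q+3), My}"
    and "preds (N1 q) (Rn (q+2)) = {Nn (q+2), Nn (q+3), Ma}"
    and "preds (N1 q) (Rn (q+3)) = Nn ` {1..q+2}"
  using assms unfolding edges_N1 char_edges_identified_def m_edges_def by auto

lemma dem_N1_cases: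
  assumes "v \<in> dem (N1 q) t"
  obtains n where "t = Tn n" "1 \<le> n" "n \<le> 4" "v \<in> m_dem (Tn n)"
    | "t = Rn 1" "v = Xn (q+2)"
    | i where "t = Rn i" "v = Xn i" "2 \<le> i" "i \<le> q + 1"
    | "t = Rn (q+2)" "v = Xn (q+2)"
    | "t = Rn (q+3)" "v = Ma"
proof (cases t)
  case (Tn n)
  with assms show thesis
    by (intro that(1)[of n]) (auto simp: N1_def char_dem_def m_dem_def split: if_splits)
next
  case (Rn i)
  with assms have "v \<in> ident ` char_dem q (Rn i)"
    by (simp add: N1_def m_dem_def)
  moreover have "i = 1 \<or> 2 \<le> i \<and> i \<le> q + 1 \<or> i = q + 2 \<or> i = q + 3 \<or> i = 0 \<or> q + 3 < i"
    by linarith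
  ultimately show thesis
    using Rn that(2-5) by (auto simp: char_dem_def ident_def)
qed (use assms in \<open>auto simp: N1_def char_dem_def m_dem_def\<close>)

definition m_inputs :: "nat \<Rightarrow> nat \<Rightarrow> node set" where
  "m_inputs q i = preds (N1 q) (Mn i) - {My}"

lemma finite_m_inputs: "finite (m_inputs q i)"
  by (simp add: m_inputs_def finite_preds_N1)

lemma m_inputs_N1:
  assumes "q \<ge> 2"
  shows "m_inputs q 1 = {Ma}"
    and "m_inputs q (q+2) = Xn ` {2..q+1}"
    and "m_inputs q (q+3) = insert Ma (insert (Xn (q+2)) (Xn ` {2..q+1}))"
    and "2 \<le> i \<Longrightarrow> i \<le> q + 1 \<Longrightarrow> m_inputs q (q+3) = insert (Xn i) (m_inputs q i)"
    and "Xn i \<notin> m_inputs q i"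
  using assms unfolding m_inputs_def edges_N1 char_edges_identified_def m_edges_def by auto

lemma sum_m_inputs_last:
  assumes "q \<ge> 2"
  shows "(\<Sum>u\<in>m_inputs q (q+3). f u) = f Ma + (f (Xn (q+2)) + (\<Sum>u\<in>Xn ` {2..q+1}. f u))"
proof -
  have "Xn (q+2) \<notin> Xn ` {2..q+1}" and "Ma \<notin> insert (Xn (q+2)) (Xn ` {2..q+1})"
    by auto
  then show ?thesis
    by (simp add: m_inputs_N1(3)[OF assms])
qed

definition N1_code :: "nat \<Rightarrow> node \<times> node \<Rightarrow> node \<times> node \<Rightarrow> nat \<Rightarrow> nat \<Rightarrow> 'a::comm_ring_1" where
  "N1_code k e' e = (case fst e of
     Mn _ \<Rightarrow> if fst e' = My then zero_mat else id_mat
   | Nn _ \<Rightarrow> id_mat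
   | Um _ \<Rightarrow>
       if snd e = Vn 3 then (if fst e' \<in> {Ma, Mx} then upper_to_lower k else upper_part k)
       else (if fst e' \<in> {Ma, Mx} then lower_part k else lower_to_upper k)
   | Vn n \<Rightarrow>
       if n = 3 then
         (case snd e of
            Tn t \<Rightarrow>
              if fst e' = Um 1 then (if t \<le> 2 then lower_part k else upper_to_lower k)
              else (if t \<in> {1, 3} then lower_to_upper k else upper_part k)
          | _ \<Rightarrow> zero_mat)
       else id_mat
   | _ \<Rightarrow> zero_mat)"

definition N1_decoder :: "nat \<Rightarrow> nat \<Rightarrow> node \<Rightarrow> node \<Rightarrow> node \<times> node \<Rightarrow> nat \<Rightarrow> nat \<Rightarrow> 'a::comm_ring_1" where
  "N1_decoder q k t v e = (case t of
     Rn i \<Rightarrow>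
       if i = q + 3 then (if fst e = Nn 1 then id_mat else zero_mat)
       else if fst e = Nn (q + 3) then id_mat
       else if fst e = My then zero_mat
       else neg_id_mat
   | Tn _ \<Rightarrow>
       if v \<in> {Ma, Mb} then
         (if fst e = Vn 1 then (if v = Ma then lower_part k else upper_to_lower k)
          else if fst e = Vn 3 then lower_to_upper k else zero_mat)
       else
         (if fst e = Vn 2 then (if v = Mx then lower_part k else upper_to_lower k)
          else if fst e = Vn 3 then upper_part k else zero_mat)
   | _ \<Rightarrow> zero_mat)"

lemma mv_N1_decoder_Rn:
  assumes "i \<noteq> q + 3" and "j < d"
  shows "mv d (N1_decoder q k (Rn i) v (u, Rn i)) w j
    = (if u = Nn (q + 3) then w j else if u = My then 0 else - w j)"
  using assms by (simp add: N1_decoder_def mv_block_mats)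

context
  fixes q k d :: nat and x :: "node \<Rightarrow> nat \<Rightarrow> 'a::field" and y :: "node \<times> node \<Rightarrow> nat \<Rightarrow> 'a"
  assumes q: "q \<ge> 2" and d: "d = k + k"
    and code: "edge_eqs (N1 q) d (\<lambda>_. id_mat) (N1_code k) x y"
begin

\<comment> \<open>keep node indices such as 1 and q + 2 in the form in which the edge lemmas state them\<close>
declare One_nat_def [simp del] add_2_eq_Suc [simp del] add_2_eq_Suc' [simp del]

lemma y_source_edge: "(u, w) \<in> edges (N1 q) \<Longrightarrow> u \<in> srcs (N1 q) \<Longrightarrow> j < d \<Longrightarrow> y (u, w) j = x u j"
  using edge_eqs_source_edge[OF code] by (simp add: mv_block_mats)

lemma y_inner_edge:
  "(u, w) \<in> edges (N1 q) \<Longrightarrow> u \<notin> srcs (N1 q) \<Longrightarrow>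
   y (u, w) j = (\<Sum>u'\<in>preds (N1 q) u. mv d (N1_code k (u', u) (u, w)) (y (u', u)) j)"
  by (rule edge_eqs_inner_edge[OF code])

lemma y_Nn_edge:
  assumes e: "(Nn i, w) \<in> edges (N1 q)" and i: "1 \<le> i" "i \<le> q + 3" and j: "j < d"
  shows "y (Nn i, w) j = (\<Sum>u\<in>m_inputs q i. x u j)"
proof -
  have Mn_Nn: "(Mn i, Nn i) \<in> edges (N1 q)"
    using i by (rule edges_N1_simps)
  have "y (Nn i, w) j = y (Mn i, Nn i) j"
    using j by (simp add: y_inner_edge[OF e] srcs_N1_simps preds_N1_Nn[OF e] N1_code_def mv_block_mats)
  also have "\<dots> = (\<Sum>u\<in>preds (N1 q) (Mn i). if u \<noteq> My then x u j else 0)"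
    by (simp add: y_inner_edge[OF Mn_Nn] srcs_N1_simps)
      (rule sum.cong, auto simp: N1_code_def mv_block_mats y_source_edge srcs_N1_if_edge_into_Mn j)
  also have "\<dots> = (\<Sum>u\<in>m_inputs q i. x u j)"
    by (simp add: sum.inter_filter[symmetric] finite_preds_N1 m_inputs_def set_diff_eq)
  finally show ?thesis .
qed

lemma y_Um_edges:
  assumes j: "j < d"
  shows "y (Um 1, Vn 1) j = (if j < k then x Ma j else x Mb (j - k))"
    and "y (Um 1, Vn 3) j = (if j < k then x Ma (j + k) else x Mb j)"
    and "y (Um 2, Vn 2) j = (if j < k then x Mx j else x My (j - k))"
    and "y (Um 2, Vn 3) j = (if j < k then x Mx (j + k) else x My j)"
proof -
  have src: "y (Ma, Um 1) i = x Ma i" "y (Mb, Um 1) i = x Mb i"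
      "y (Mx, Um 2) i = x Mx i" "y (My, Um 2) i = x My i" if "i < d" for i
    using that by (simp_all add: y_source_edge edges_N1_simps srcs_N1_simps)
  show "y (Um 1, Vn 1) j = (if j < k then x Ma j else x Mb (j - k))"
    "y (Um 1, Vn 3) j = (if j < k then x Ma (j + k) else x Mb j)"
    "y (Um 2, Vn 2) j = (if j < k then x Mx j else x My (j - k))"
    "y (Um 2, Vn 3) j = (if j < k then x Mx (j + k) else x My j)"
    using j d by (auto simp: y_inner_edge edges_N1_simps srcs_N1_simps
        preds_N1_M_network N1_code_def mv_block_mats src)
qed

lemma y_Tn_edges:
  assumes t: "1 \<le> t" "t \<le> 4" and j: "j < d"
  shows "y (Vn 1, Tn t) j = (if j < k then x Ma j else x Mb (j - k))"
    and "y (Vn 2, Tn t) j = (if j < k then x Mx j else x My (j - k))"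
    and "y (Vn 3, Tn t) j = (if j < k then (if t \<le> 2 then x Ma (j + k) else x Mb (j + k))
                             else (if t \<in> {1, 3} then x Mx j else x My j))"
proof -
  have e: "(Vn i, Tn t) \<in> edges (N1 q)" if "1 \<le> i" "i \<le> 3" for i
    using that t by (rule edges_N1_simps)
  show "y (Vn 1, Tn t) j = (if j < k then x Ma j else x Mb (j - k))"
    "y (Vn 2, Tn t) j = (if j < k then x Mx j else x My (j - k))"
    using j by (simp_all add: y_inner_edge e srcs_N1_simps preds_N1_M_network
        N1_code_def mv_block_mats y_Um_edges)
  have "y (Vn 3, Tn t) j = mv d (if t \<le> 2 then lower_part k else upper_to_lower k) (y (Um 1, Vn 3)) j
      + mv d (if t \<in> {1, 3} then lower_to_upper k else upper_part k) (y (Um 2, Vn 3)) j"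
    by (simp add: y_inner_edge e srcs_N1_simps preds_N1_M_network N1_code_def)
  also have "\<dots> = (if j < k then (if t \<le> 2 then x Ma (j + k) else x Mb (j + k))
                   else (if t \<in> {1, 3} then x Mx j else x My j))"
    using j d by (auto simp: mv_block_mats y_Um_edges)
  finally show "y (Vn 3, Tn t) j = \<dots>" .
qed

abbreviation decoded :: "node \<Rightarrow> node \<Rightarrow> nat \<Rightarrow> 'a" where
  "decoded t v j \<equiv> \<Sum>e\<in>in_edges (N1 q) t. mv d (N1_decoder q k t v e) (y e) j"

lemma decoded_Tn:
  assumes t: "1 \<le> t" "t \<le> 4" and v: "v \<in> m_dem (Tn t)" and j: "j < d"
  shows "decoded (Tn t) v j = x v j"
proof -
  define g where "g u = mv d (N1_decoder q k (Tn t) v (u, Tn t)) (y (u, Tn t)) j" for u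
  have "decoded (Tn t) v j = (\<Sum>u\<in>preds (N1 q) (Tn t). g u)"
    unfolding g_def by (rule sum_in_edges)
  also have "\<dots> = (\<Sum>u\<in>{Vn 1, Vn 2, Vn 3}. g u)"
    using preds_N1_M_network(6)[OF t] preds_N1_M_network(7)
    by (intro sum.mono_neutral_right finite_preds_N1) (auto simp: g_def N1_decoder_def mv_block_mats)
  also have "\<dots> = g (Vn 1) + g (Vn 2) + g (Vn 3)"
    by simp
  also have "\<dots> = x v j"
    using t v j d
    by (auto simp: m_dem_def g_def N1_decoder_def mv_block_mats y_Tn_edges split: if_splits)
  finally show ?thesis .
qed

lemma decoded_Rn_middle:
  assumes i: "2 \<le> i" "i \<le> q + 1" and j: "j < d"
  shows "decoded (Rn i) (Xn i) j = x (Xn i) j"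
proof -
  have preds: "{Nn i, Nn (q+3)} \<subseteq> preds (N1 q) (Rn i)" "preds (N1 q) (Rn i) \<subseteq> {Nn i, Nn (q+3), My}"
    using preds_N1_Rn(2,3)[OF q i] by auto
  define g where "g u = mv d (N1_decoder q k (Rn i) (Xn i) (u, Rn i)) (y (u, Rn i)) j" for u
  have "decoded (Rn i) (Xn i) j = (\<Sum>u\<in>preds (N1 q) (Rn i). g u)"
    unfolding g_def by (rule sum_in_edges)
  also have "\<dots> = g (Nn i) + g (Nn (q+3))"
    using preds i j
    by (subst sum.mono_neutral_right[OF finite_preds_N1 preds(1)]) (auto simp: g_def mv_N1_decoder_Rn)
  also have "\<dots> = - (\<Sum>u\<in>m_inputs q i. x u j) + (\<Sum>u\<in>m_inputs q (q+3). x u j)"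
    using preds i j by (simp add: g_def mv_N1_decoder_Rn y_Nn_edge)
  also have "\<dots> = x (Xn i) j"
    using i by (simp add: m_inputs_N1(4,5)[OF q] finite_m_inputs)
  finally show ?thesis .
qed

lemma decoded_Rn_penultimate:
  assumes j: "j < d"
  shows "decoded (Rn (q+2)) (Xn (q+2)) j = x (Xn (q+2)) j"
proof -
  define g where "g u = mv d (N1_decoder q k (Rn (q+2)) (Xn (q+2)) (u, Rn (q+2))) (y (u, Rn (q+2))) j" for u
  have preds: "preds (N1 q) (Rn (q+2)) = {Nn (q+2), Nn (q+3), Ma}"
    by (rule preds_N1_Rn(4)[OF q])
  then have e: "(Ma, Rn (q+2)) \<in> edges (N1 q)" "(Nn (q+2), Rn (q+2)) \<in> edges (N1 q)"
      "(Nn (q+3), Rn (q+2)) \<in> edges (N1 q)"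
    by blast+
  have "g Ma = - x Ma j"
    using j by (simp add: g_def mv_N1_decoder_Rn y_source_edge[OF e(1)] srcs_N1_simps)
  moreover have "g (Nn (q+2)) = - (\<Sum>u\<in>Xn ` {2..q+1}. x u j)"
    and "g (Nn (q+3)) = x Ma j + (x (Xn (q+2)) j + (\<Sum>u\<in>Xn ` {2..q+1}. x u j))"
    using j by (simp_all add: g_def mv_N1_decoder_Rn y_Nn_edge[OF e(2)] y_Nn_edge[OF e(3)]
        m_inputs_N1(2)[OF q] sum_m_inputs_last[OF q])
  moreover have "decoded (Rn (q+2)) (Xn (q+2)) j = g (Nn (q+2)) + (g (Nn (q+3)) + g Ma)"
    unfolding g_def sum_in_edges preds by simp
  ultimately show ?thesis
    by simp
qed

lemma decoded_Rn_last:
  assumes j: "j < d"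
  shows "decoded (Rn (q+3)) Ma j = x Ma j"
proof -
  define g where "g u = mv d (N1_decoder q k (Rn (q+3)) Ma (u, Rn (q+3))) (y (u, Rn (q+3))) j" for u
  have preds: "preds (N1 q) (Rn (q+3)) = Nn ` {1..q+2}"
    by (rule preds_N1_Rn(5)[OF q])
  have "decoded (Rn (q+3)) Ma j = (\<Sum>u\<in>preds (N1 q) (Rn (q+3)). g u)"
    unfolding g_def by (rule sum_in_edges)
  also have "\<dots> = g (Nn 1)"
    using preds by (subst sum.mono_neutral_right[of _ "{Nn 1}"]) (auto simp: g_def N1_decoder_def mv_block_mats)
  also have "\<dots> = x Ma j"
  proof -
    have "(Nn 1, Rn (q+3)) \<in> edges (N1 q)"
      using preds by force
    then show ?thesis
      using j by (simp add: g_def N1_decoder_def mv_block_mats y_Nn_edge m_inputs_N1(1)[OF q])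
  qed
  finally show ?thesis .
qed

lemma decoded_Rn_first:
  assumes j: "j < d"
  shows "decoded (Rn 1) (Xn (q+2)) j = x (Xn (q+2)) j"
proof -
  define X where "X = Xn ` {2..q+1}"
  define g where "g u = mv d (N1_decoder q k (Rn 1) (Xn (q+2)) (u, Rn 1)) (y (u, Rn 1)) j" for u
  have preds: "preds (N1 q) (Rn 1) = insert (Nn 1) (insert (Nn (q+3)) X)"
    unfolding X_def by (rule preds_N1_Rn(1)[OF q])
  then have e: "(Nn 1, Rn 1) \<in> edges (N1 q)" "(Nn (q+3), Rn 1) \<in> edges (N1 q)"
      "\<And>u. u \<in> X \<Longrightarrow> (u, Rn 1) \<in> edges (N1 q)"
    by blast+
  have "g (Nn 1) = - x Ma j"
    and "g (Nn (q+3)) = x Ma j + (x (Xn (q+2)) j + (\<Sum>u\<in>X. x u j))"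
    using q j by (simp_all add: g_def mv_N1_decoder_Rn y_Nn_edge[OF e(1)] y_Nn_edge[OF e(2)]
        m_inputs_N1(1)[OF q] sum_m_inputs_last[OF q] X_def)
  moreover have "(\<Sum>u\<in>X. g u) = - (\<Sum>u\<in>X. x u j)"
    unfolding sum_negf[symmetric]
  proof (rule sum.cong)
    fix u assume "u \<in> X"
    then show "g u = - x u j"
      using q j e(3) by (auto simp: g_def mv_N1_decoder_Rn y_source_edge srcs_N1_simps X_def)
  qed simp
  moreover have "decoded (Rn 1) (Xn (q+2)) j = g (Nn 1) + (g (Nn (q+3)) + (\<Sum>u\<in>X. g u))"
    unfolding g_def sum_in_edges preds by (simp add: X_def image_iff)
  ultimately show ?thesis
    by simp
qed

lemma decoded_demands: "v \<in> dem (N1 q) t \<Longrightarrow> j < d \<Longrightarrow> decoded t v j = x v j"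
  by (erule dem_N1_cases)
    (simp_all add: decoded_Tn decoded_Rn_first decoded_Rn_middle decoded_Rn_penultimate decoded_Rn_last)

end

theorem lemma7:
  fixes q d :: nat
  assumes "q \<ge> 2" and "d > 0" and "even d"
  shows "has_vlnc_solution (N1 q) d TYPE('a::{field,finite})"
proof -
  obtain k where d: "d = k + k"
    using \<open>even d\<close> by (metis evenE mult_2)
  have "vlnc_solution (N1 q) d (\<lambda>_. id_mat :: nat \<Rightarrow> nat \<Rightarrow> 'a) (N1_code k) (N1_decoder q k)"
    unfolding vlnc_solution_def
    using edge_eqs_solvable[OF level_edges_N1[of _ q]] decoded_demands[OF \<open>q \<ge> 2\<close> d] by blast
  then show ?thesis
    unfolding has_vlnc_solution_def by blast
qed

end
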